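(* Let $\sum_{n=1}^{\infty}x_n$ be a divergent series of positive real terms with $\lim_{n\to\infty}x_n=0$, and let $S=\{\sum_{n=1}^{\infty}(x_n-x_{\sigma(n)}) : \sigma\in S_\infty,\ \text{the series converges}\}$. Then either $S=\mathbb{R}$ or $S$ is a halfline bounded from below, i.e. there is $c\in\mathbb{R}$ with $S=[c,\infty)$ or $S=(c,\infty)$.
   Context: $S_\infty$ denotes the set of all permutations of $\mathbb{N}$. *)

theory Defs
  imports Complex_Main
begin

end

theory Submission
  imports Defs
begin

text \<open>
  The set of attainable sums contains 0 (take the identity) and is closed upwards, so it is
  either all of \<real> or a half-line. Upward closedness reduces to the following: if \<open>v\<close> is a
  positive null sequence with divergent sum and \<open>d > 0\<close>, there is a permutation \<open>\<tau>\<close> with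
  \<open>\<Sum>(v n - v (\<tau> n)) = d\<close>; applying it to \<open>v = x \<circ> \<sigma>\<close> and composing gives \<open>\<sigma> \<circ> \<tau>\<close>.

  To build \<open>\<tau>\<close>, choose sparse indices \<open>late k\<close> with \<open>v (late k) \<le> (1/2)\<^sup>k\<close> and \<open>v\<close>-mass at least
  \<open>d\<close> between consecutive ones. Scanning \<open>\<nat>\<close>, push each index onto a queue while the mass of
  the entries not yet popped is below \<open>d\<close>, and at \<open>late k\<close> pop the oldest entry \<open>early k\<close>; \<open>\<tau>\<close> swaps
  \<open>early k\<close> with \<open>late k\<close>. The \<open>N\<close>-th partial sum equals the mass of the unpopped entries at
  time \<open>N\<close> minus that of their \<open>late\<close> partners; the first tends to \<open>d\<close> because
  \<open>v \<longlonglongrightarrow> 0\<close>, the second to 0 by the geometric bound.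
\<close>

lemma filterlim_at_top_if_inj:
  fixes \<sigma> :: "nat \<Rightarrow> nat"
  assumes "inj \<sigma>"
  shows "filterlim \<sigma> at_top sequentially"
  unfolding filterlim_at_top eventually_sequentially
proof
  fix M :: nat
  have "finite (\<sigma> -` {..<M})"
    using assms by (intro finite_vimageI) auto
  then obtain B where B: "\<forall>n\<in>\<sigma> -` {..<M}. n < B"
    using finite_nat_set_iff_bounded by blast
  show "\<exists>B. \<forall>n\<ge>B. M \<le> \<sigma> n"
  proof (intro exI allI impI)
    fix n
    assume "B \<le> n"
    then have "n \<notin> \<sigma> -` {..<M}"
      using B by (meson leD)
    then show "M \<le> \<sigma> n" by simp
  qed
qed

lemma not_summable_comp_bij:
  fixes x :: "nat \<Rightarrow> real"
  assumes "bij \<sigma>" "\<And>n. 0 \<le> x n" "\<not> summable x"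
  shows "\<not> summable (x \<circ> \<sigma>)"
proof
  assume "summable (x \<circ> \<sigma>)"
  then have "summable ((x \<circ> \<sigma>) \<circ> inv \<sigma>)"
    by (rule summable_reindex) (use assms in \<open>auto intro: bij_is_inj bij_imp_bij_inv\<close>)
  moreover have "(x \<circ> \<sigma>) \<circ> inv \<sigma> = x"
    using assms(1) by (simp add: fun_eq_iff bij_is_surj surj_f_inv_f)
  ultimately show False
    using assms(3) by simp
qed

lemma upward_closed_cases:
  fixes S :: "'a :: conditionally_complete_linorder set"
  assumes "S \<noteq> {}" and up: "\<And>z y. z \<in> S \<Longrightarrow> z \<le> y \<Longrightarrow> y \<in> S"
  shows "S = UNIV \<or> (\<exists>c. S = {c..} \<or> S = {c<..})"
proof (cases "bdd_below S")
  case False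
  have "y \<in> S" for y
  proof -
    obtain z where "z \<in> S" "\<not> y \<le> z"
      using False unfolding bdd_below_def by blast
    then show ?thesis
      using up[of z y] by simp
  qed
  then show ?thesis by blast
next
  case bdd: True
  have above: "y \<in> S" if "Inf S < y" for y
  proof -
    have "\<exists>z\<in>S. z < y"
      using cInf_less_iff[OF assms(1) bdd] that by simp
    then obtain z where "z \<in> S" "z < y" ..
    then show ?thesis
      using up[of z y] by simp
  qed
  have below: "Inf S \<le> y" if "y \<in> S" for y
    using cInf_lower[OF that bdd] .
  show ?thesis
  proof (cases "Inf S \<in> S")
    case True
    then have "S = {Inf S..}"
      using below up[OF True] by auto
    then show ?thesis by blast
  next
    case False
    then have "S = {Inf S<..}"
      using above below by (auto simp: less_le)
    then show ?thesis by blast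
  qed
qed

lemma nat_eqI_less: "(\<And>k::nat. k < a \<longleftrightarrow> k < b) \<Longrightarrow> a = b"
  by (metis less_irrefl nat_neq_iff)

lemma sum_half_powers_le: "(\<Sum>k = c..<m. (1/2::real) ^ k) \<le> 2 * (1/2) ^ c"
proof (cases "c \<le> m")
  case True
  then have "(\<Sum>k = c..<m. (1/2::real) ^ k) = 2 * (1/2) ^ c - 2 * (1/2) ^ m"
    by (induction m rule: dec_induct) auto
  then show ?thesis by simp
qed simp

locale rearrangement_gain =
  fixes v :: "nat \<Rightarrow> real" and d :: real
  assumes pos: "\<And>n. 0 < v n" and tendsto_zero: "v \<longlonglongrightarrow> 0"
    and divergent: "\<not> summable v" and gain_pos: "0 < d"
begin

lemma nonneg: "0 \<le> v n"
  using pos less_imp_le by blast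

lemma block_exists:
  assumes "0 < e"
  shows "\<exists>q. d \<le> sum v {p..<q} \<and> v q \<le> e"
proof -
  have "\<exists>Q. d \<le> sum v {p..<Q}"
  proof (rule ccontr)
    assume "\<nexists>Q. d \<le> sum v {p..<Q}"
    then have "sum v {0 + p..<n + p} \<le> d" for n
      by (simp add: not_le less_imp_le)
    then have "(\<Sum>i<n. v (i + p)) \<le> d" for n
      by (simp only: sum.shift_bounds_nat_ivl atLeast0LessThan)
    then have "summable (\<lambda>i. v (i + p))"
      by (intro summableI_nonneg_bounded[where x = d]) (simp_all add: nonneg)
    then show False
      using divergent by simp
  qed
  then obtain Q where Q: "d \<le> sum v {p..<Q}" ..
  have "eventually (\<lambda>n. v n < e) sequentially"
    by (rule order_tendstoD(2)[OF tendsto_zero assms])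
  then obtain K where K: "\<forall>n\<ge>K. v n < e"
    by (auto simp: eventually_sequentially)
  have "sum v {p..<Q} \<le> sum v {p..<max Q K}"
    by (intro sum_mono2) (auto simp: nonneg)
  then show ?thesis
    using Q K by (intro exI[of _ "max Q K"]) (simp add: less_imp_le)
qed

primrec late :: "nat \<Rightarrow> nat" where
  "late 0 = (LEAST q. d \<le> sum v {0..<q} \<and> v q \<le> (1/2) ^ 0)"
| "late (Suc k) = (LEAST q. d \<le> sum v {Suc (late k)..<q} \<and> v q \<le> (1/2) ^ Suc k)"

definition block_start :: "nat \<Rightarrow> nat" where
  "block_start k = (case k of 0 \<Rightarrow> 0 | Suc j \<Rightarrow> Suc (late j))"

lemma late_block: "d \<le> sum v {block_start k..<late k} \<and> v (late k) \<le> (1/2) ^ k"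
proof -
  have "(0::real) < (1/2) ^ k" by simp
  from LeastI_ex[OF block_exists[OF this]] show ?thesis
    by (cases k) (simp_all add: block_start_def)
qed

declare late.simps [simp del]

lemma block_start_Suc [simp]: "block_start (Suc k) = Suc (late k)"
  by (simp add: block_start_def)

lemma block_start_less_late: "block_start k < late k"
  using late_block[of k] gain_pos by (cases "block_start k < late k") auto

lemma late_small: "v (late k) \<le> (1/2) ^ k"
  using late_block by blast

lemma strict_mono_late: "strict_mono late"
proof (intro strict_mono_Suc_iff[THEN iffD2] allI)
  fix k
  show "late k < late (Suc k)"
    using block_start_less_late[of "Suc k"] by simp
qed

lemma late_less_iff: "late i < late j \<longleftrightarrow> i < j"
  using strict_mono_late by (simp add: strict_mono_less)

lemma late_le_iff: "late i \<le> late j \<longleftrightarrow> i \<le> j"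
  using strict_mono_late by (simp add: strict_mono_less_eq)

lemma late_eq_iff: "late i = late j \<longleftrightarrow> i = j"
  using late_le_iff by (metis order.eq_iff)

lemma notin_late_in_block:
  assumes "block_start k \<le> n" "n < late k"
  shows "n \<notin> range late"
proof
  assume "n \<in> range late"
  then obtain j where j: "n = late j" by blast
  then have "j < k"
    using assms(2) by (simp add: late_less_iff)
  then obtain i where k: "k = Suc i" and "j \<le> i"
    by (cases k) auto
  then have "late j \<le> late i"
    by (simp add: late_le_iff)
  moreover have "Suc (late i) \<le> n"
    using assms(1) k by simp
  ultimately show False
    using j by simp
qed

definition closed :: "nat \<Rightarrow> nat" where
  "closed N = (LEAST k. N \<le> late k)"

lemma late_less_iff_closed: "late k < N \<longleftrightarrow> k < closed N"
proof -
  have upper: "N \<le> late (closed N)"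
    unfolding closed_def using seq_suble[OF strict_mono_late] by (intro LeastI) blast
  show ?thesis
  proof
    assume "late k < N"
    show "k < closed N"
    proof (rule ccontr)
      assume "\<not> k < closed N"
      then have "late (closed N) \<le> late k"
        by (simp add: late_le_iff)
      with upper \<open>late k < N\<close> show False by simp
    qed
  next
    assume "k < closed N"
    then have "\<not> N \<le> late k"
      unfolding closed_def by (rule not_less_Least)
    then show "late k < N" by simp
  qed
qed

lemma closed_late: "closed (late j) = j"
  by (rule nat_eqI_less) (simp add: late_less_iff_closed[symmetric] late_less_iff)

lemma closed_Suc_late: "closed (Suc (late j)) = Suc j"
  by (rule nat_eqI_less) (simp add: late_less_iff_closed[symmetric] less_Suc_eq_le late_le_iff)

lemma closed_Suc_notin: "N \<notin> range late \<Longrightarrow> closed (Suc N) = closed N"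
  by (rule nat_eqI_less) (auto simp: late_less_iff_closed[symmetric] less_Suc_eq)

lemma closed_Suc: "closed (Suc N) = (if N \<in> range late then Suc (closed N) else closed N)"
  using closed_Suc_notin closed_Suc_late closed_late by auto

lemma closed_block_start: "closed (block_start k) = k"
  by (cases k) (simp_all add: block_start_def closed_Suc_late, simp add: closed_def)

text \<open>
  \<open>queue N\<close> lists, in increasing order, the indices below \<open>N\<close> that have been pushed; the first
  \<open>closed N\<close> of them have already been popped and the rest form the open part.
\<close>

primrec queue :: "nat \<Rightarrow> nat list" where
  "queue 0 = []"
| "queue (Suc N) =
    (if N \<notin> range late \<and> (\<Sum>k = closed N..<length (queue N). v (queue N ! k)) < d
     then queue N @ [N] else queue N)"

definition open_mass :: "nat \<Rightarrow> real" where
  "open_mass N = (\<Sum>k = closed N..<length (queue N). v (queue N ! k))"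

definition pushed :: "nat \<Rightarrow> bool" where
  "pushed N \<longleftrightarrow> N \<notin> range late \<and> open_mass N < d"

lemma queue_Suc: "queue (Suc N) = (if pushed N then queue N @ [N] else queue N)"
  by (simp add: pushed_def open_mass_def)

declare queue.simps(2) [simp del]

lemma open_mass_nonneg: "0 \<le> open_mass N"
  unfolding open_mass_def by (rule sum_nonneg) (simp add: nonneg)

lemma closed_less_length_if_open_mass_pos: "0 < open_mass N \<Longrightarrow> closed N < length (queue N)"
  unfolding open_mass_def by (cases "closed N < length (queue N)") auto

lemma queue_prefix: "N \<le> M \<Longrightarrow> \<exists>ys. queue M = queue N @ ys \<and> (\<forall>y\<in>set ys. N \<le> y)"
proof (induction M rule: dec_induct)
  case (step m)
  then obtain ys where "queue m = queue N @ ys" "\<forall>y\<in>set ys. N \<le> y" by blast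
  then show ?case
    using step.hyps by (auto simp: queue_Suc intro!: exI[of _ "ys @ [m]"])
qed simp

lemma queue_less: "n \<in> set (queue N) \<Longrightarrow> n < N"
  by (induction N) (auto simp: queue_Suc split: if_splits)

lemma queue_notin_late: "n \<in> set (queue N) \<Longrightarrow> n \<notin> range late"
  by (induction N) (auto simp: queue_Suc pushed_def split: if_splits)

lemma sorted_queue: "sorted_wrt (<) (queue N)"
  by (induction N) (auto simp: queue_Suc sorted_wrt_append dest: queue_less)

lemma length_queue_mono: "N \<le> M \<Longrightarrow> length (queue N) \<le> length (queue M)"
  using queue_prefix by fastforce

lemma queue_nth_stable: "N \<le> M \<Longrightarrow> k < length (queue N) \<Longrightarrow> queue M ! k = queue N ! k"
  using queue_prefix by (fastforce simp: nth_append)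

lemma queue_nth_ge:
  assumes "N \<le> M" "length (queue N) \<le> k" "k < length (queue M)"
  shows "N \<le> queue M ! k"
proof -
  obtain ys where ys: "queue M = queue N @ ys" "\<forall>y\<in>set ys. N \<le> y"
    using queue_prefix[OF assms(1)] by blast
  then have "queue M ! k = ys ! (k - length (queue N))" "k - length (queue N) < length ys"
    using assms by (auto simp: nth_append)
  then show ?thesis
    using ys(2) by auto
qed

lemma open_mass_Suc_pushed:
  assumes "pushed N" "closed N \<le> length (queue N)"
  shows "open_mass (Suc N) = open_mass N + v N"
proof -
  have "N \<notin> range late"
    using assms(1) by (simp add: pushed_def)
  then have "open_mass (Suc N) = (\<Sum>k = closed N..<Suc (length (queue N)). v ((queue N @ [N]) ! k))"
    using assms by (simp add: open_mass_def queue_Suc closed_Suc_notin)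
  also have "\<dots> = (\<Sum>k = closed N..<length (queue N). v ((queue N @ [N]) ! k)) + v N"
    using assms(2) by (simp add: nth_append)
  also have "(\<Sum>k = closed N..<length (queue N). v ((queue N @ [N]) ! k)) = open_mass N"
    unfolding open_mass_def by (rule sum.cong) (auto simp: nth_append)
  finally show ?thesis .
qed

lemma open_mass_Suc_skip: "\<not> pushed N \<Longrightarrow> N \<notin> range late \<Longrightarrow> open_mass (Suc N) = open_mass N"
  by (simp add: open_mass_def queue_Suc closed_Suc_notin)

lemma open_mass_Suc_late:
  assumes "N \<in> range late" "closed N < length (queue N)"
  shows "open_mass (Suc N) = open_mass N - v (queue N ! closed N)"
proof -
  have "open_mass N = v (queue N ! closed N) + (\<Sum>k = Suc (closed N)..<length (queue N). v (queue N ! k))"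
    unfolding open_mass_def using assms(2) by (rule sum.atLeast_Suc_lessThan)
  moreover have "open_mass (Suc N) = (\<Sum>k = Suc (closed N)..<length (queue N). v (queue N ! k))"
    using assms by (simp add: open_mass_def queue_Suc pushed_def closed_Suc)
  ultimately show ?thesis by simp
qed

lemma open_mass_between_pops:
  assumes "p \<le> q" "\<And>n. p \<le> n \<Longrightarrow> n < q \<Longrightarrow> n \<notin> range late"
    and "closed p \<le> length (queue p)" and "p \<le> n" "n \<le> q"
  shows "closed n = closed p \<and> length (queue p) \<le> length (queue n)
    \<and> min d (open_mass p + sum v {p..<n}) \<le> open_mass n"
  using assms(4,5)
proof (induction n rule: dec_induct)
  case (step n)
  have late: "n \<notin> range late"
    using assms(2) step by auto
  have closed: "closed (Suc n) = closed p"
    using step closed_Suc_notin[OF late] by simp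
  have length: "length (queue n) \<le> length (queue (Suc n))"
    by (rule length_queue_mono) simp
  have "closed n \<le> length (queue n)"
    using step assms(3) by simp
  show ?case
  proof (cases "pushed n")
    case True
    then have "open_mass (Suc n) = open_mass n + v n" "open_mass n < d"
      using open_mass_Suc_pushed \<open>closed n \<le> length (queue n)\<close> by (auto simp: pushed_def)
    then show ?thesis
      using closed length step by (auto simp: min_def split: if_splits)
  next
    case False
    then have "open_mass (Suc n) = open_mass n" "d \<le> open_mass n"
      using open_mass_Suc_skip[OF _ late] late by (auto simp: pushed_def)
    then show ?thesis
      using closed length step by (auto simp: min_def)
  qed
qed simp

lemma open_at_late_if_block_start:
  assumes "k \<le> length (queue (block_start k))"
  shows "k < length (queue (late k)) \<and> d \<le> open_mass (late k)"
proof -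
  have "min d (open_mass (block_start k) + sum v {block_start k..<late k}) \<le> open_mass (late k)"
    using open_mass_between_pops[of "block_start k" "late k" "late k"] block_start_less_late[of k]
      notin_late_in_block[of k] assms by (simp add: closed_block_start)
  then have "d \<le> open_mass (late k)"
    using late_block[of k] open_mass_nonneg[of "block_start k"] by (simp add: min_def split: if_splits)
  then show ?thesis
    using closed_less_length_if_open_mass_pos[of "late k"] gain_pos by (simp add: closed_late)
qed

lemma open_at_late: "k < length (queue (late k)) \<and> d \<le> open_mass (late k)"
proof (induction k)
  case 0
  show ?case by (rule open_at_late_if_block_start) simp
next
  case (Suc k)
  have "length (queue (Suc (late k))) = length (queue (late k))"
    by (simp add: queue_Suc pushed_def)
  then show ?case
    using Suc by (intro open_at_late_if_block_start) simp
qed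

lemma closed_le_length: "closed N \<le> length (queue N)"
proof (cases "closed N")
  case (Suc j)
  then have "length (queue (Suc (late j))) \<le> length (queue N)"
    using late_less_iff_closed[of j N] by (intro length_queue_mono) simp
  moreover have "length (queue (Suc (late j))) = length (queue (late j))"
    by (simp add: queue_Suc pushed_def)
  ultimately show ?thesis
    using open_at_late[of j] Suc by simp
qed simp

lemma open_mass_Suc_le: "open_mass (Suc N) \<le> max (open_mass N) (d + v N)"
proof (cases "N \<in> range late")
  case True
  then obtain j where "N = late j" by blast
  then have "closed N < length (queue N)"
    using open_at_late[of j] by (simp add: closed_late)
  then have "open_mass (Suc N) = open_mass N - v (queue N ! closed N)"
    by (rule open_mass_Suc_late[OF True])
  then show ?thesis
    using pos[of "queue N ! closed N"] by simp
next
  case False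
  then show ?thesis
    using open_mass_Suc_pushed[OF _ closed_le_length] open_mass_Suc_skip
    by (cases "pushed N") (auto simp: pushed_def)
qed

definition early :: "nat \<Rightarrow> nat" where
  "early k = queue (late k) ! k"

lemma queue_nth: "k < length (queue N) \<Longrightarrow> queue N ! k = early k"
  unfolding early_def using queue_nth_stable open_at_late
  by (cases "N \<le> late k") (simp_all add: not_le less_imp_le)

lemma early_less_iff: "early k < N \<longleftrightarrow> k < length (queue N)"
proof
  assume "k < length (queue N)"
  then show "early k < N"
    using queue_nth queue_less nth_mem by metis
next
  assume less: "early k < N"
  show "k < length (queue N)"
  proof (rule ccontr)
    assume "\<not> k < length (queue N)"
    moreover have "k < length (queue (max N (late k)))"
      using open_at_late[of k] length_queue_mono[of "late k" "max N (late k)"] by simp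
    ultimately have "N \<le> queue (max N (late k)) ! k"
      by (intro queue_nth_ge) simp_all
    then show False
      using less queue_nth \<open>k < length (queue (max N (late k)))\<close> by simp
  qed
qed

lemma early_less_late: "early k < late k"
  using early_less_iff open_at_late by blast

lemma early_notin_late: "early k \<notin> range late"
  using queue_nth open_at_late queue_notin_late nth_mem by metis

lemma strict_mono_early: "strict_mono early"
proof (intro strict_mono_Suc_iff[THEN iffD2] allI)
  fix k
  have "Suc k < length (queue (late (Suc k)))"
    using open_at_late by blast
  then have "queue (late (Suc k)) ! k < queue (late (Suc k)) ! Suc k"
    using sorted_queue[of "late (Suc k)"] by (simp add: sorted_wrt_iff_nth_less)
  then show "early k < early (Suc k)"
    using \<open>Suc k < length (queue (late (Suc k)))\<close> by (simp add: queue_nth)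
qed

lemma open_mass_eq: "open_mass N = (\<Sum>k = closed N..<length (queue N). v (early k))"
  unfolding open_mass_def by (rule sum.cong) (auto simp: queue_nth)

lemma pushed_early: "pushed (early k)"
proof (rule ccontr)
  assume "\<not> pushed (early k)"
  then have "queue (Suc (early k)) = queue (early k)"
    by (simp add: queue_Suc)
  moreover have "k < length (queue (Suc (early k)))" "\<not> k < length (queue (early k))"
    using early_less_iff by auto
  ultimately show False by simp
qed

lemma open_mass_lower:
  assumes "late k < N" "N \<le> late (Suc k)"
  shows "d - v (early k) \<le> open_mass N"
proof -
  let ?p = "block_start (Suc k)"
  have "open_mass ?p = open_mass (late k) - v (early k)"
    using open_mass_Suc_late[of "late k"] open_at_late[of k] by (simp add: closed_late queue_nth)
  then have "d - v (early k) \<le> open_mass ?p"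
    using open_at_late[of k] by simp
  moreover have "min d (open_mass ?p + sum v {?p..<N}) \<le> open_mass N"
    using open_mass_between_pops[of ?p "late (Suc k)" N] block_start_less_late[of "Suc k"]
      notin_late_in_block[of "Suc k"] closed_le_length[of ?p] assms by simp
  moreover have "0 \<le> sum v {?p..<N}"
    by (simp add: sum_nonneg nonneg)
  ultimately show ?thesis
    using pos[of "early k"] by (simp add: min_def split: if_splits)
qed

lemma open_mass_upper:
  assumes "\<forall>n\<ge>K. v n \<le> e" "Suc (early K) \<le> N"
  shows "open_mass N \<le> d + e"
  using assms(2)
proof (induction N rule: dec_induct)
  case base
  have "K \<le> early K"
    using strict_mono_early by (rule seq_suble)
  then show ?case
    using pushed_early[of K] open_mass_Suc_pushed[OF _ closed_le_length] assms(1)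
    by (fastforce simp: pushed_def)
next
  case (step n)
  have "K \<le> n"
    using step seq_suble[OF strict_mono_early, of K] by simp
  then show ?case
    using open_mass_Suc_le[of n] step assms(1) by fastforce
qed

lemma open_mass_tendsto: "open_mass \<longlonglongrightarrow> d"
proof (rule LIMSEQ_I)
  fix r :: real
  assume "0 < r"
  then have "eventually (\<lambda>n. v n < r / 2) sequentially"
    by (intro order_tendstoD(2)[OF tendsto_zero]) simp
  then obtain K where "\<forall>n\<ge>K. v n < r / 2"
    by (auto simp: eventually_sequentially)
  then have K: "\<forall>n\<ge>K. v n \<le> r / 2"
    using less_imp_le by blast
  have "(\<lambda>k. v (early k)) \<longlonglongrightarrow> 0"
    using LIMSEQ_subseq_LIMSEQ[OF tendsto_zero strict_mono_early] by (simp add: o_def)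
  then have "eventually (\<lambda>k. v (early k) < r / 2) sequentially"
    by (rule order_tendstoD(2)) (simp add: \<open>0 < r\<close>)
  then obtain K' where K': "\<forall>k\<ge>K'. v (early k) < r / 2"
    by (auto simp: eventually_sequentially)
  show "\<exists>N0. \<forall>N\<ge>N0. norm (open_mass N - d) < r"
  proof (intro exI allI impI)
    fix N
    assume N: "max (Suc (late K')) (Suc (early K)) \<le> N"
    then have "late K' < N"
      by simp
    then have "K' < closed N"
      using late_less_iff_closed by blast
    then obtain j where j: "closed N = Suc j" "K' \<le> j"
      by (cases "closed N") auto
    then have "d - v (early j) \<le> open_mass N"
      using late_less_iff_closed[of j N] late_less_iff_closed[of "Suc j" N]
      by (intro open_mass_lower) simp_all
    moreover have "open_mass N \<le> d + r / 2"
      using N by (intro open_mass_upper[OF K]) simp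
    ultimately show "norm (open_mass N - d) < r"
      using K' j(2) \<open>0 < r\<close> by (fastforce simp: abs_le_iff)
  qed
qed

definition swap :: "nat \<Rightarrow> nat" where
  "swap n = (if n \<in> range early then late (inv early n)
    else if n \<in> range late then early (inv late n) else n)"

lemma swap_early: "swap (early k) = late k"
  using strict_mono_early by (simp add: swap_def strict_mono_imp_inj_on)

lemma swap_late: "swap (late k) = early k"
proof -
  have "late k \<notin> range early"
    using early_notin_late by (metis imageE rangeI)
  then show ?thesis
    using strict_mono_late by (simp add: swap_def strict_mono_imp_inj_on)
qed

lemma swap_other: "n \<notin> range early \<Longrightarrow> n \<notin> range late \<Longrightarrow> swap n = n"
  by (simp add: swap_def)

lemma swap_swap: "swap (swap n) = n"
proof -
  consider k where "n = early k" | k where "n = late k" | "n \<notin> range early" "n \<notin> range late"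
    by blast
  then show ?thesis
    by cases (simp_all add: swap_early swap_late swap_other)
qed

lemma bij_swap: "bij swap"
  using swap_swap by (intro o_bij[of swap]) (simp_all add: fun_eq_iff)

definition pending :: "nat \<Rightarrow> nat set" where
  "pending N = {k. early k < N \<and> N \<le> late k}"

lemma pending_eq: "pending N = {closed N..<length (queue N)}"
  unfolding pending_def using early_less_iff late_less_iff_closed by (auto simp: not_less[symmetric])

lemma pending_Suc_early: "pending (Suc (early k)) = insert k (pending (early k))"
  using early_less_late[of k] early_notin_late strict_mono_early
  by (auto simp: pending_def less_Suc_eq Suc_le_eq order.order_iff_strict strict_mono_eq)

lemma pending_late: "pending (late k) = insert k (pending (Suc (late k)))"
  using early_less_late[of k] early_notin_late
  by (auto simp: pending_def less_Suc_eq Suc_le_eq order.order_iff_strict late_eq_iff)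

lemma pending_Suc_other: "N \<notin> range early \<Longrightarrow> N \<notin> range late \<Longrightarrow> pending (Suc N) = pending N"
  by (auto simp: pending_def less_Suc_eq Suc_le_eq order.order_iff_strict)

lemma sum_swap_eq_pending: "(\<Sum>n<N. v n - v (swap n)) = (\<Sum>k\<in>pending N. v (early k) - v (late k))"
proof (induction N)
  case 0
  then show ?case by (simp add: pending_def)
next
  case (Suc N)
  have finite: "finite (pending M)" for M
    by (simp add: pending_eq)
  consider k where "N = early k" | k where "N = late k" | "N \<notin> range early" "N \<notin> range late"
    by blast
  then show ?case
  proof cases
    case 1
    moreover have "k \<notin> pending N"
      using 1 by (simp add: pending_def)
    ultimately show ?thesis
      using Suc finite by (simp add: pending_Suc_early swap_early)
  next
    case 2
    moreover have "k \<notin> pending (Suc N)"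
      using 2 by (simp add: pending_def)
    ultimately show ?thesis
      using Suc finite by (simp add: pending_late[of k] swap_late)
  qed (use Suc in \<open>simp add: pending_Suc_other swap_other\<close>)
qed

lemma sum_late_pending_tendsto_zero: "(\<lambda>N. \<Sum>k\<in>pending N. v (late k)) \<longlonglongrightarrow> 0"
proof (rule tendsto_sandwich[of "\<lambda>_. 0" _ _ "\<lambda>N. 2 * (1/2) ^ closed N"])
  show "\<forall>\<^sub>F N in sequentially. 0 \<le> (\<Sum>k\<in>pending N. v (late k))"
    by (simp add: sum_nonneg nonneg)
  have "(\<Sum>k\<in>pending N. v (late k)) \<le> 2 * (1/2) ^ closed N" for N
  proof -
    have "(\<Sum>k\<in>pending N. v (late k)) \<le> (\<Sum>k\<in>pending N. (1/2) ^ k)"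
      by (intro sum_mono late_small)
    also have "\<dots> \<le> 2 * (1/2) ^ closed N"
      unfolding pending_eq by (rule sum_half_powers_le)
    finally show ?thesis .
  qed
  then show "\<forall>\<^sub>F N in sequentially. (\<Sum>k\<in>pending N. v (late k)) \<le> 2 * (1/2) ^ closed N"
    by simp
  have "filterlim closed at_top sequentially"
    unfolding filterlim_at_top eventually_sequentially
    using late_less_iff_closed by (metis Suc_le_eq less_imp_le)
  then have "(\<lambda>N. (1/2::real) ^ closed N) \<longlonglongrightarrow> 0"
    using filterlim_compose[OF LIMSEQ_power_zero[of "1/2::real"]] by simp
  then show "(\<lambda>N. 2 * (1/2::real) ^ closed N) \<longlonglongrightarrow> 0"
    using tendsto_mult_right_zero by blast
qed simp

lemma swap_sums: "(\<lambda>n. v n - v (swap n)) sums d"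
proof -
  have "(\<Sum>n<N. v n - v (swap n)) = open_mass N - (\<Sum>k\<in>pending N. v (late k))" for N
    unfolding sum_swap_eq_pending open_mass_eq pending_eq by (rule sum_subtractf)
  moreover have "(\<lambda>N. open_mass N - (\<Sum>k\<in>pending N. v (late k))) \<longlonglongrightarrow> d - 0"
    by (intro tendsto_diff open_mass_tendsto sum_late_pending_tendsto_zero)
  ultimately show ?thesis
    by (simp add: sums_def)
qed

end

lemma bij_diff_sums_exists:
  fixes v :: "nat \<Rightarrow> real"
  assumes "\<And>n. 0 < v n" "v \<longlonglongrightarrow> 0" "\<not> summable v" "0 < d"
  shows "\<exists>\<tau>. bij \<tau> \<and> (\<lambda>n. v n - v (\<tau> n)) sums d"
proof -
  interpret rearrangement_gain v d
    using assms by unfold_locales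
  show ?thesis
    using bij_swap swap_sums by blast
qed

lemma bij_diff_sums_greater:
  fixes x :: "nat \<Rightarrow> real"
  assumes pos: "\<And>n. 0 < x n" and div: "\<not> summable x" and lim: "x \<longlonglongrightarrow> 0"
    and \<sigma>: "bij \<sigma>" "(\<lambda>n. x n - x (\<sigma> n)) sums z" and "z < y"
  shows "\<exists>\<rho>. bij \<rho> \<and> (\<lambda>n. x n - x (\<rho> n)) sums y"
proof -
  have "(x \<circ> \<sigma>) \<longlonglongrightarrow> 0"
    using filterlim_compose[OF lim filterlim_at_top_if_inj[OF bij_is_inj[OF \<sigma>(1)]]]
    by (simp add: o_def)
  moreover have "\<not> summable (x \<circ> \<sigma>)"
    using not_summable_comp_bij[OF \<sigma>(1) _ div] pos less_imp_le by blast
  ultimately obtain \<tau> where \<tau>: "bij \<tau>" "(\<lambda>n. x (\<sigma> n) - x (\<sigma> (\<tau> n))) sums (y - z)"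
    using bij_diff_sums_exists[of "x \<circ> \<sigma>" "y - z"] pos \<open>z < y\<close> by auto
  have "(\<lambda>n. (x n - x (\<sigma> n)) + (x (\<sigma> n) - x (\<sigma> (\<tau> n)))) sums (z + (y - z))"
    by (rule sums_add[OF \<sigma>(2) \<tau>(2)])
  then have "(\<lambda>n. x n - x ((\<sigma> \<circ> \<tau>) n)) sums y"
    by simp
  then show ?thesis
    using bij_comp[OF \<tau>(1) \<sigma>(1)] by blast
qed

theorem mainTheorem7:
  fixes x :: "nat \<Rightarrow> real"
  assumes pos: "\<And>n. x n > 0"
    and div: "\<not> summable x"
    and lim: "x \<longlonglongrightarrow> 0"
  defines "S \<equiv> {s. \<exists>\<sigma>. bij \<sigma> \<and> (\<lambda>n. x n - x (\<sigma> n)) sums s}"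
  shows "S = UNIV \<or> (\<exists>c. S = {c..} \<or> S = {c<..})"
proof (rule upward_closed_cases)
  show "S \<noteq> {}"
    unfolding S_def using bij_id by fastforce
  fix z y
  assume "z \<in> S" "z \<le> y"
  then show "y \<in> S"
    using bij_diff_sums_greater[OF pos div lim] unfolding S_def
    by (cases "z = y") auto
qed

end
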